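(* For any $d\ge1$ and $j\in[d]$, the function $f:\mathbb R^d\to\mathbb R$, $f(\zeta)=\mathrm{smax}(\zeta)_j=e^{\zeta_j}/\sum_{i=1}^de^{\zeta_i}$, is real-analytic of $(1/(2e^2),1)$-type (constant functions).
   Context: Let $U\subseteq\mathbb R^d$ be open and $\tau_1,\tau_2:U\to\mathbb R_{>0}$. A real-analytic $f:U\to\mathbb R$ has $(\tau_1,\tau_2)$-type if for every $\zeta_0\in U$, writing the power series of $f$ at $\zeta_0$ as $\sum_\mu a_{\zeta_0,\mu}(\zeta-\zeta_0)^\mu$ (over multi-indices $\mu$), for every $\zeta$ with $\|\zeta-\zeta_0\|_\infty\le\tau_1(\zeta_0)$ the series converges absolutely and $\sum_{\mu:|\mu|\ge1}|a_{\zeta_0,\mu}|\,|\zeta-\zeta_0|^\mu\le\tau_2(\zeta_0)$, where $|\zeta-\zeta_0|^\mu=\prod_i|\zeta_i-\zeta_{0,i}|^{\mu_i}$. *)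

theory Defs
  imports "HOL-Analysis.Analysis"
begin

text \<open>Points of R^d are vectors of type real^'n with d = CARD('n).
  Multi-indices are functions 'n => nat.\<close>

definition mono_pow :: "real^'n \<Rightarrow> ('n::finite \<Rightarrow> nat) \<Rightarrow> real" where
  "mono_pow x \<mu> = (\<Prod>i\<in>UNIV. (x$i) ^ (\<mu> i))"

definition mi_deg :: "('n::finite \<Rightarrow> nat) \<Rightarrow> nat" where
  "mi_deg \<mu> = (\<Sum>i\<in>UNIV. \<mu> i)"

text \<open>a is the (multivariate) power series of f at z0: it converges absolutely to f
  on a neighbourhood of z0 (unordered sums of reals are absolute sums).\<close>
definition power_series_at ::
  "(real^'n \<Rightarrow> real) \<Rightarrow> real^'n \<Rightarrow> (('n::finite \<Rightarrow> nat) \<Rightarrow> real) \<Rightarrow> bool" where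
  "power_series_at f z0 a \<longleftrightarrow>
     (\<exists>r>0. \<forall>z. (\<forall>i. \<bar>z$i - z0$i\<bar> < r) \<longrightarrow>
        ((\<lambda>\<mu>. a \<mu> * mono_pow (z - z0) \<mu>) has_sum f z) UNIV)"

definition real_analytic_on_vec :: "(real^'n::finite) set \<Rightarrow> (real^'n \<Rightarrow> real) \<Rightarrow> bool" where
  "real_analytic_on_vec U f \<longleftrightarrow> (\<forall>z0\<in>U. \<exists>a. power_series_at f z0 a)"

definition has_analytic_type ::
  "(real^'n::finite) set \<Rightarrow> (real^'n \<Rightarrow> real) \<Rightarrow> (real^'n \<Rightarrow> real) \<Rightarrow> (real^'n \<Rightarrow> real) \<Rightarrow> bool" where
  "has_analytic_type U \<tau>1 \<tau>2 f \<longleftrightarrow>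
     real_analytic_on_vec U f \<and>
     (\<forall>z0\<in>U. \<forall>a. power_series_at f z0 a \<longrightarrow>
        (\<forall>z. (\<forall>i. \<bar>z$i - z0$i\<bar> \<le> \<tau>1 z0) \<longrightarrow>
           (\<lambda>\<mu>. \<bar>a \<mu>\<bar> * \<bar>mono_pow (z - z0) \<mu>\<bar>) summable_on UNIV \<and>
           (\<Sum>\<^sub>\<infinity>\<mu>\<in>{\<mu>. mi_deg \<mu> \<ge> 1}. \<bar>a \<mu>\<bar> * \<bar>mono_pow (z - z0) \<mu>\<bar>) \<le> \<tau>2 z0))"

definition smax :: "real^'n \<Rightarrow> 'n::finite \<Rightarrow> real" where
  "smax z j = exp (z$j) / (\<Sum>i\<in>UNIV. exp (z$i))"

end

theory Submission
  imports Defs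
begin

(* Write p = smax z0. Then smax (z0 + w) j = p_j e^(w_j) / (1 + T(w)) with
   T(w) = sum_i p_i (e^(w_i) - 1), and expanding e^(w_j) and the geometric series in T(w)
   gives a power series in w. Its coefficients are dominated in absolute value by the
   nonnegative coefficients of p_j e^(w_j) / (1 - T(w)), so for |w_i| <= r the absolute series
   is at most p_j e^|w_j| / (1 - T(|w|)). Coefficients of a power series are unique (slice off
   one variable at a time and use uniqueness in one variable), so every expansion of smax at z0
   is this one. For r <= 1/6 we have e^|w_i| <= 1 + 2r, and the absolute series without its
   constant term p_j is at most p_j (1 + 2r) / (1 - 2r) - p_j <= 1; finally 1/(2e^2) < 1/6. *)

lemma has_sum_sum:
  fixes f :: "'i \<Rightarrow> 'a \<Rightarrow> 'b::topological_comm_monoid_add"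
  assumes "finite I" and "\<And>i. i \<in> I \<Longrightarrow> (f i has_sum s i) A"
  shows "((\<lambda>x. \<Sum>i\<in>I. f i x) has_sum (\<Sum>i\<in>I. s i)) A"
  using assms
proof (induction I rule: finite_induct)
  case (insert i I)
  then show ?case
    using has_sum_add[where f = "f i" and a = "s i" and A = A] by simp
qed simp

lemma has_sum_diff:
  fixes f g :: "'a \<Rightarrow> 'b::topological_ab_group_add"
  assumes "(f has_sum a) A" and "(g has_sum b) A"
  shows "((\<lambda>x. f x - g x) has_sum a - b) A"
  using has_sum_add[OF assms(1) has_sum_uminus[where f = g and a = "-b", THEN iffD2]] assms(2) by simp

lemma has_sum_product_real:
  fixes f :: "'a \<Rightarrow> real" and g :: "'b \<Rightarrow> real"
  assumes f: "(f has_sum A) X" and g: "(g has_sum B) Y"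
  shows "((\<lambda>(x, y). f x * g y) has_sum A * B) (X \<times> Y)"
proof (rule has_sum_SigmaI[where g = "\<lambda>x. f x * B"])
  show "((\<lambda>y. (\<lambda>(x, y). f x * g y) (x, y)) has_sum f x * B) Y" for x
    using has_sum_cmult_right[OF g] by simp
  show "((\<lambda>x. f x * B) has_sum A * B) X"
    using has_sum_cmult_left[OF f] by simp
  have absf: "(\<lambda>x. \<bar>f x\<bar>) summable_on X"
    using f summable_on_iff_abs_summable_on_real summable_on_def by fastforce
  have "(\<lambda>y. \<bar>g y\<bar>) summable_on Y"
    using g summable_on_iff_abs_summable_on_real summable_on_def by fastforce
  then have absg: "((\<lambda>y. \<bar>g y\<bar>) has_sum (\<Sum>\<^sub>\<infinity>y\<in>Y. \<bar>g y\<bar>)) Y"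
    by (rule has_sum_infsum)
  have "(\<lambda>(x, y). \<bar>f x * g y\<bar>) summable_on X \<times> Y"
  proof (rule summable_on_SigmaI[where g = "\<lambda>x. \<bar>f x\<bar> * (\<Sum>\<^sub>\<infinity>y\<in>Y. \<bar>g y\<bar>)"])
    show "((\<lambda>y. (\<lambda>(x, y). \<bar>f x * g y\<bar>) (x, y)) has_sum \<bar>f x\<bar> * (\<Sum>\<^sub>\<infinity>y\<in>Y. \<bar>g y\<bar>)) Y" for x
      using has_sum_cmult_right[OF absg, of "\<bar>f x\<bar>"] by (simp add: abs_mult)
    show "(\<lambda>x. \<bar>f x\<bar> * (\<Sum>\<^sub>\<infinity>y\<in>Y. \<bar>g y\<bar>)) summable_on X"
      by (rule summable_on_cmult_left[OF absf])
  qed auto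
  then show "(\<lambda>(x, y). f x * g y) summable_on X \<times> Y"
    by (subst summable_on_iff_abs_summable_on_real) (simp add: case_prod_unfold)
qed

lemma has_sum_geometric:
  fixes c :: real
  assumes "\<bar>c\<bar> < 1"
  shows "((\<lambda>n. c ^ n) has_sum 1 / (1 - c)) UNIV"
proof (rule norm_summable_imp_has_sum)
  show "summable (\<lambda>n. norm (c ^ n))"
    using summable_geometric[of "\<bar>c\<bar>"] assms by (simp add: power_abs)
  show "(\<lambda>n. c ^ n) sums (1 / (1 - c))"
    using geometric_sums[of c] assms by simp
qed

lemma has_sum_exp_series: "((\<lambda>k. x ^ k / fact k) has_sum exp (x::real)) UNIV"
proof (rule norm_summable_imp_has_sum)
  show "summable (\<lambda>k. norm (x ^ k / fact k))"
    using summable_exp[of "\<bar>x\<bar>"] by (simp add: power_abs divide_inverse abs_mult mult.commute)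
  show "(\<lambda>k. x ^ k / fact k) sums exp x"
    using exp_converges[of x] by (simp add: divide_inverse scaleR_conv_of_real mult.commute)
qed

lemma has_sum_power_series_eq_0:
  fixes c :: "nat \<Rightarrow> real"
  assumes r: "r > 0" and zero: "\<And>t. \<bar>t\<bar> < r \<Longrightarrow> ((\<lambda>n. c n * t ^ n) has_sum 0) UNIV"
  shows "c n = 0"
proof (induction n rule: less_induct)
  case (less m)
  have tail: "(\<lambda>n. c (n + m) * t ^ n) sums 0" if "t \<noteq> 0" "\<bar>t\<bar> < r" for t
  proof -
    have "(\<lambda>n. c n * t ^ n) sums 0"
      using zero that(2) has_sum_imp_sums by blast
    then have "(\<lambda>n. c (n + m) * t ^ (n + m)) sums 0"
      using sums_iff_shift[of "\<lambda>n. c n * t ^ n" m 0] less.IH by simp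
    then have "(\<lambda>n. c (n + m) * t ^ (n + m) / t ^ m) sums 0"
      using sums_divide by fastforce
    then show ?thesis
      using that(1) by (simp add: power_add)
  qed
  have "((\<lambda>_. 0) \<longlongrightarrow> c (0 + m)) (at (0::real))"
    by (rule powser_limit_0_strong[OF r]) (use tail in auto)
  then show "c m = 0"
    using LIM_const_eq by fastforce
qed

lemma finite_atMost_multi_index: "finite {..\<mu> :: 'n::finite \<Rightarrow> nat}"
proof -
  have "{..\<mu>} = PiE UNIV (\<lambda>i. {..\<mu> i})"
    by (auto simp: PiE_def Pi_def le_fun_def)
  then show ?thesis
    by (simp add: finite_PiE)
qed

lemma atMost_0_multi_index [simp]: "{..(\<lambda>_. 0) :: 'n \<Rightarrow> nat} = {\<lambda>_. 0}"
  by (auto simp: le_fun_def fun_eq_iff)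

lemma mono_pow_0 [simp]: "mono_pow w (\<lambda>_. 0) = 1"
  by (simp add: mono_pow_def)

lemma mono_pow_add: "mono_pow w (\<lambda>i. \<mu> i + \<nu> i) = mono_pow w \<mu> * mono_pow w \<nu>"
  by (simp add: mono_pow_def power_add prod.distrib)

lemma mono_pow_zero_vec: "mono_pow 0 \<mu> = (if \<mu> = (\<lambda>_. 0) then 1 else 0)"
proof (cases "\<mu> = (\<lambda>_. 0)")
  case False
  then obtain i where "\<mu> i \<noteq> 0"
    by (auto simp: fun_eq_iff)
  then have "(\<Prod>l\<in>UNIV. 0 $ l ^ \<mu> l) = (0::real)"
    by (intro prod_zero) auto
  with False show ?thesis
    by (simp add: mono_pow_def)
qed simp

lemma mono_pow_fun_upd:
  assumes "\<nu> k = 0" and "\<And>i. i \<noteq> k \<Longrightarrow> v$i = w$i"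
  shows "mono_pow v (\<nu>(k := m)) = (v$k)^m * mono_pow w \<nu>"
proof -
  have "mono_pow v (\<nu>(k := m)) = (v$k)^m * (\<Prod>i\<in>UNIV-{k}. (w$i)^(\<nu> i))"
    unfolding mono_pow_def using assms(2) by (subst prod.remove[of UNIV k]) (auto intro!: prod.cong)
  also have "(\<Prod>i\<in>UNIV-{k}. (w$i)^(\<nu> i)) = mono_pow w \<nu>"
    unfolding mono_pow_def using assms(1) prod.remove[of UNIV k "\<lambda>i. (w$i)^(\<nu> i)"] by simp
  finally show ?thesis .
qed

definition vec_abs :: "real^'n \<Rightarrow> real^'n" where
  "vec_abs w = (\<chi> i. \<bar>w$i\<bar>)"

lemma vec_abs_nth [simp]: "vec_abs w $ i = \<bar>w$i\<bar>"
  by (simp add: vec_abs_def)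

lemma vec_abs_idem [simp]: "vec_abs (vec_abs w) = vec_abs w"
  by (simp add: vec_abs_def)

lemma abs_mono_pow: "\<bar>mono_pow w \<mu>\<bar> = mono_pow (vec_abs w) \<mu>"
  by (simp add: mono_pow_def abs_prod power_abs)

lemma mono_pow_vec_abs_nonneg: "0 \<le> mono_pow (vec_abs w) \<mu>"
  by (simp add: mono_pow_def prod_nonneg)

lemma mi_deg_eq_0_iff: "mi_deg \<mu> = 0 \<longleftrightarrow> \<mu> = (\<lambda>_. 0)"
  by (auto simp: mi_deg_def fun_eq_iff)

lemma mi_deg_diff:
  assumes "\<nu> \<le> \<mu>"
  shows "mi_deg (\<mu> - \<nu>) = mi_deg \<mu> - mi_deg \<nu>"
proof -
  have "mi_deg (\<mu> - \<nu>) + mi_deg \<nu> = mi_deg \<mu>"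
    unfolding mi_deg_def sum.distrib[symmetric] using assms by (intro sum.cong) (auto simp: le_fun_def)
  then show ?thesis
    by linarith
qed

lemma mi_deg_mono: "\<nu> \<le> \<mu> \<Longrightarrow> mi_deg \<nu> \<le> mi_deg \<mu>"
  unfolding mi_deg_def by (intro sum_mono) (simp add: le_fun_def)

lemma infsum_mi_deg_ge_1:
  fixes f :: "('n::finite \<Rightarrow> nat) \<Rightarrow> 'a::{topological_ab_group_add, t2_space}"
  assumes "f summable_on UNIV"
  shows "(\<Sum>\<^sub>\<infinity>\<mu>\<in>{\<mu>. 1 \<le> mi_deg \<mu>}. f \<mu>) = infsum f UNIV - f (\<lambda>_. 0)"
proof -
  have "{\<mu>. 1 \<le> mi_deg \<mu>} = {\<mu>. mi_deg \<mu> \<noteq> 0}"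
    by auto
  also have "\<dots> = UNIV - {\<lambda>_. 0}"
    by (auto simp: mi_deg_eq_0_iff)
  finally have deg: "{\<mu>. 1 \<le> mi_deg \<mu>} = UNIV - {\<lambda>_. 0}" .
  have "infsum f (insert (\<lambda>_. 0) (UNIV - {\<lambda>_. 0})) = f (\<lambda>_. 0) + infsum f (UNIV - {\<lambda>_. 0})"
    by (rule infsum_insert) (simp_all add: summable_on_cofin_subset[OF assms])
  moreover have "insert (\<lambda>_. 0) (UNIV - {\<lambda>_. 0}) = UNIV"
    by blast
  ultimately show ?thesis
    unfolding deg by (simp add: algebra_simps)
qed

lemma has_sum_reindex_fun_upd:
  fixes f :: "('n \<Rightarrow> nat) \<Rightarrow> 'a::{comm_monoid_add, topological_space}"
  shows "(f has_sum s) UNIV \<longleftrightarrow> ((\<lambda>(m, \<nu>). f (\<nu>(k := m))) has_sum s) (UNIV \<times> {\<nu>. \<nu> k = 0})"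
  by (rule has_sum_reindex_bij_witness[where j = "\<lambda>\<mu>. (\<mu> k, \<mu>(k := 0))" and i = "\<lambda>(m, \<nu>). \<nu>(k := m)"])
     (auto simp: fun_eq_iff)

definition mi_conv :: "(('n::finite \<Rightarrow> nat) \<Rightarrow> real) \<Rightarrow> (('n \<Rightarrow> nat) \<Rightarrow> real) \<Rightarrow> ('n \<Rightarrow> nat) \<Rightarrow> real"
  where "mi_conv a b \<mu> = (\<Sum>\<nu>\<in>{..\<mu>}. a \<nu> * b (\<mu> - \<nu>))"

lemma mi_conv_zero_index [simp]: "mi_conv a b (\<lambda>_. 0) = a (\<lambda>_. 0) * b (\<lambda>_. 0)"
  by (simp add: mi_conv_def fun_diff_def)

lemma abs_mi_conv_le: "\<bar>mi_conv a b \<mu>\<bar> \<le> mi_conv (\<lambda>\<nu>. \<bar>a \<nu>\<bar>) (\<lambda>\<nu>. \<bar>b \<nu>\<bar>) \<mu>"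
  unfolding mi_conv_def by (rule order_trans[OF sum_abs]) (simp add: abs_mult)

lemma mi_conv_mono:
  assumes "\<And>\<nu>. 0 \<le> a \<nu>" and "\<And>\<nu>. b \<nu> \<le> b' \<nu>"
  shows "mi_conv a b \<mu> \<le> mi_conv a b' \<mu>"
  unfolding mi_conv_def by (intro sum_mono mult_left_mono assms)

lemma mi_conv_nonneg:
  assumes "\<And>\<nu>. 0 \<le> a \<nu>" and "\<And>\<nu>. 0 \<le> b \<nu>"
  shows "0 \<le> mi_conv a b \<mu>"
  unfolding mi_conv_def by (intro sum_nonneg mult_nonneg_nonneg assms)

lemma has_sum_mi_conv:
  assumes a: "((\<lambda>\<mu>. a \<mu> * mono_pow w \<mu>) has_sum A) UNIV"
    and b: "((\<lambda>\<mu>. b \<mu> * mono_pow w \<mu>) has_sum B) UNIV"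
  shows "((\<lambda>\<mu>. mi_conv a b \<mu> * mono_pow w \<mu>) has_sum A * B) UNIV"
proof -
  define F where "F = (\<lambda>(\<mu>, \<nu>). a \<nu> * b (\<mu> - \<nu>) * mono_pow w \<mu>)"
  have "((\<lambda>(\<nu>, \<kappa>). a \<nu> * mono_pow w \<nu> * (b \<kappa> * mono_pow w \<kappa>)) has_sum A * B) (UNIV \<times> UNIV)"
    using has_sum_product_real[OF a b] by simp
  moreover have "((\<lambda>(\<nu>, \<kappa>). a \<nu> * mono_pow w \<nu> * (b \<kappa> * mono_pow w \<kappa>)) has_sum A * B) (UNIV \<times> UNIV)
      \<longleftrightarrow> (F has_sum A * B) (SIGMA \<mu>:UNIV. {..\<mu>})"
    by (rule has_sum_reindex_bij_witness[where j = "\<lambda>(\<nu>, \<kappa>). (\<lambda>i. \<nu> i + \<kappa> i, \<nu>)"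
          and i = "\<lambda>(\<mu>, \<nu>). (\<nu>, \<mu> - \<nu>)"])
       (auto simp: F_def mono_pow_add le_fun_def fun_eq_iff fun_diff_def)
  ultimately have "(F has_sum A * B) (SIGMA \<mu>:UNIV. {..\<mu>})"
    by blast
  then show ?thesis
    by (rule has_sum_SigmaD)
       (auto simp: F_def mi_conv_def sum_distrib_right finite_atMost_multi_index intro!: has_sum_finiteI)
qed

primrec mi_conv_pow :: "(('n::finite \<Rightarrow> nat) \<Rightarrow> real) \<Rightarrow> nat \<Rightarrow> ('n \<Rightarrow> nat) \<Rightarrow> real" where
  "mi_conv_pow a 0 = (\<lambda>\<mu>. if \<mu> = (\<lambda>_. 0) then 1 else 0)"
| "mi_conv_pow a (Suc m) = mi_conv a (mi_conv_pow a m)"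

lemma has_sum_mono_pow_const: "((\<lambda>\<mu>. (if \<mu> = (\<lambda>_. 0) then c else 0) * mono_pow w \<mu>) has_sum c) UNIV"
  by (rule has_sum_finite_neutralI[where B = "{\<lambda>_. 0}"]) auto

lemma has_sum_mi_conv_pow:
  assumes "((\<lambda>\<mu>. a \<mu> * mono_pow w \<mu>) has_sum A) UNIV"
  shows "((\<lambda>\<mu>. mi_conv_pow a m \<mu> * mono_pow w \<mu>) has_sum A ^ m) UNIV"
proof (induction m)
  case 0
  show ?case
    using has_sum_mono_pow_const[of 1 w] by simp
qed (simp add: has_sum_mi_conv[OF assms])

lemma abs_mi_conv_pow_le: "\<bar>mi_conv_pow a m \<mu>\<bar> \<le> mi_conv_pow (\<lambda>\<nu>. \<bar>a \<nu>\<bar>) m \<mu>"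
proof (induction m arbitrary: \<mu>)
  case (Suc m)
  have "\<bar>mi_conv_pow a (Suc m) \<mu>\<bar> \<le> mi_conv (\<lambda>\<nu>. \<bar>a \<nu>\<bar>) (\<lambda>\<nu>. \<bar>mi_conv_pow a m \<nu>\<bar>) \<mu>"
    by (simp add: abs_mi_conv_le)
  also have "\<dots> \<le> mi_conv_pow (\<lambda>\<nu>. \<bar>a \<nu>\<bar>) (Suc m) \<mu>"
    by (simp add: mi_conv_mono Suc.IH)
  finally show ?case .
qed simp

lemma mi_conv_pow_nonneg: "(\<And>\<nu>. 0 \<le> a \<nu>) \<Longrightarrow> 0 \<le> mi_conv_pow a m \<mu>"
  by (induction m arbitrary: \<mu>) (simp_all add: mi_conv_nonneg)

lemma mi_conv_pow_eq_0:
  assumes "a (\<lambda>_. 0) = 0" and "mi_deg \<mu> < m"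
  shows "mi_conv_pow a m \<mu> = 0"
  using assms(2)
proof (induction m arbitrary: \<mu>)
  case (Suc m)
  have vanish: "a \<nu> * mi_conv_pow a m (\<mu> - \<nu>) = 0" if "\<nu> \<le> \<mu>" for \<nu>
  proof (cases "\<nu> = (\<lambda>_. 0)")
    case False
    then have "mi_deg \<nu> \<noteq> 0"
      by (simp add: mi_deg_eq_0_iff)
    then have "mi_deg (\<mu> - \<nu>) < m"
      using mi_deg_diff[OF that] mi_deg_mono[OF that] Suc.prems by linarith
    then have "mi_conv_pow a m (\<mu> - \<nu>) = 0"
      by (rule Suc.IH)
    then show ?thesis
      by simp
  qed (simp add: assms(1))
  show ?case
    unfolding mi_conv_pow.simps mi_conv_def by (intro sum.neutral ballI) (simp add: vanish)
qed simp

(* Coefficients of 1 / (1 - A(w)) = sum_m A(w)^m; when a vanishes at 0, only the powers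
   m <= mi_deg mu contribute to the coefficient of w^mu. *)
definition mi_geom :: "(('n::finite \<Rightarrow> nat) \<Rightarrow> real) \<Rightarrow> ('n \<Rightarrow> nat) \<Rightarrow> real"
  where "mi_geom a \<mu> = (\<Sum>m\<le>mi_deg \<mu>. mi_conv_pow a m \<mu>)"

lemma mi_geom_zero_index [simp]: "mi_geom a (\<lambda>_. 0) = 1"
  by (simp add: mi_geom_def mi_deg_def)

lemma abs_mi_geom_le: "\<bar>mi_geom a \<mu>\<bar> \<le> mi_geom (\<lambda>\<nu>. \<bar>a \<nu>\<bar>) \<mu>"
  unfolding mi_geom_def by (rule order_trans[OF sum_abs sum_mono[OF abs_mi_conv_pow_le]])

lemma has_sum_mi_geom:
  assumes a0: "a (\<lambda>_. 0) = 0"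
    and S: "((\<lambda>\<mu>. \<bar>a \<mu>\<bar> * mono_pow (vec_abs w) \<mu>) has_sum S) UNIV" "S < 1"
    and T: "((\<lambda>\<mu>. a \<mu> * mono_pow w \<mu>) has_sum T) UNIV"
  shows "((\<lambda>\<mu>. mi_geom a \<mu> * mono_pow w \<mu>) has_sum 1 / (1 - T)) UNIV"
proof -
  define \<Phi> where "\<Phi> = (\<lambda>(m, \<mu>). mi_conv_pow a m \<mu> * mono_pow w \<mu>)"
  define \<Psi> where "\<Psi> = (\<lambda>(m, \<mu>). mi_conv_pow (\<lambda>\<nu>. \<bar>a \<nu>\<bar>) m \<mu> * mono_pow (vec_abs w) \<mu>)"
  have "0 \<le> S"
    by (rule has_sum_nonneg[OF S(1)]) (simp add: mono_pow_vec_abs_nonneg)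
  have "\<bar>T\<bar> \<le> S"
    using norm_has_sum_bound[OF _ T] S(1) by (simp add: abs_mult abs_mono_pow)
  have "\<Psi> summable_on UNIV \<times> UNIV"
  proof (rule summable_on_SigmaI[where g = "\<lambda>m. S ^ m"])
    show "((\<lambda>\<mu>. \<Psi> (m, \<mu>)) has_sum S ^ m) UNIV" for m
      unfolding \<Psi>_def using has_sum_mi_conv_pow[OF S(1)] by simp
    show "(\<lambda>m. S ^ m) summable_on UNIV"
      using has_sum_geometric[of S] \<open>0 \<le> S\<close> S(2) summable_on_def by auto
    show "0 \<le> \<Psi> (m, \<mu>)" for m \<mu>
      unfolding \<Psi>_def by (simp add: mi_conv_pow_nonneg mono_pow_vec_abs_nonneg)
  qed
  moreover have "norm (\<Phi> p) \<le> \<Psi> p" for p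
    by (auto simp: \<Phi>_def \<Psi>_def abs_mult abs_mono_pow split: prod.split
        intro!: mult_right_mono abs_mi_conv_pow_le mono_pow_vec_abs_nonneg)
  ultimately have "(\<lambda>p. norm (\<Phi> p)) summable_on UNIV \<times> UNIV"
    by (rule Infinite_Sum.abs_summable_on_comparison_test')
  then have "\<Phi> summable_on UNIV \<times> UNIV"
    by (rule summable_on_iff_abs_summable_on_real[THEN iffD2])
  then have "(\<Phi> has_sum 1 / (1 - T)) (UNIV \<times> UNIV)"
    using \<open>\<bar>T\<bar> \<le> S\<close> S(2)
    by (intro has_sum_SigmaI[where g = "\<lambda>m. T ^ m"] has_sum_geometric)
       (auto simp: \<Phi>_def has_sum_mi_conv_pow[OF T])
  then have "((\<lambda>(\<mu>, m). \<Phi> (m, \<mu>)) has_sum 1 / (1 - T)) (UNIV \<times> UNIV)"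
    by (rule has_sum_swap[THEN iffD1])
  then show ?thesis
  proof (rule has_sum_SigmaD)
    show "((\<lambda>m. (\<lambda>(\<mu>, m). \<Phi> (m, \<mu>)) (\<mu>, m)) has_sum mi_geom a \<mu> * mono_pow w \<mu>) UNIV" for \<mu>
      by (rule has_sum_finite_neutralI[where B = "{..mi_deg \<mu>}"])
         (auto simp: \<Phi>_def mi_geom_def sum_distrib_right mi_conv_pow_eq_0[where a = a, OF a0])
  qed
qed

(* With all variables but w_k fixed, the series becomes a power series in w_k whose m-th
   coefficient is the series of the slice nu(k := m); the slices are summable because the
   double series converges at w_k = r/2 <> 0. *)
lemma mono_pow_series_slice_eq_0:
  fixes b :: "('n::finite \<Rightarrow> nat) \<Rightarrow> real"
  assumes r: "r > 0"
    and zero: "\<And>v. \<forall>i. \<bar>v$i\<bar> < r \<Longrightarrow> ((\<lambda>\<mu>. b \<mu> * mono_pow v \<mu>) has_sum 0) UNIV"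
    and w: "\<forall>i. \<bar>w$i\<bar> < r"
  shows "((\<lambda>\<nu>. (if \<nu> k = 0 then b (\<nu>(k := m)) else 0) * mono_pow w \<nu>) has_sum 0) UNIV"
proof -
  define D where "D = {\<nu>::'n \<Rightarrow> nat. \<nu> k = 0}"
  define c where "c m \<nu> = (if \<nu> k = 0 then b (\<nu>(k := m)) else 0) * mono_pow w \<nu>" for m \<nu>
  have slices: "((\<lambda>(m, \<nu>). t ^ m * c m \<nu>) has_sum 0) (UNIV \<times> D)" if "\<bar>t\<bar> < r" for t
  proof -
    define v where "v = (\<chi> i. if i = k then t else w$i)"
    have "((\<lambda>(m, \<nu>). b (\<nu>(k := m)) * mono_pow v (\<nu>(k := m))) has_sum 0) (UNIV \<times> D)"
      using has_sum_reindex_fun_upd[of "\<lambda>\<mu>. b \<mu> * mono_pow v \<mu>" 0 k] zero[of v] w that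
      by (simp add: v_def D_def)
    moreover have "b (\<nu>(k := m)) * mono_pow v (\<nu>(k := m)) = t ^ m * c m \<nu>" if "\<nu> \<in> D" for m \<nu>
      using that mono_pow_fun_upd[of \<nu> k v w m] by (simp add: D_def c_def v_def)
    ultimately show ?thesis
      by (subst (asm) has_sum_cong) auto
  qed
  have summable: "c m summable_on UNIV" for m
  proof -
    have "(\<lambda>\<nu>. (r/2) ^ m * c m \<nu>) summable_on D"
      using summable_on_SigmaD1[where f = "\<lambda>m \<nu>. (r/2) ^ m * c m \<nu>", OF has_sum_imp_summable[OF slices]] r
      by simp
    then have "c m summable_on D"
      using r by (simp add: summable_on_cmult_right')
    then show ?thesis
      by (rule summable_on_cong_neutral[THEN iffD1, rotated -1]) (auto simp: c_def D_def)
  qed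
  have "infsum (c m) UNIV = 0" for m
  proof (rule has_sum_power_series_eq_0[OF r, where c = "\<lambda>m. infsum (c m) UNIV"])
    fix t :: real
    assume "\<bar>t\<bar> < r"
    show "((\<lambda>m. infsum (c m) UNIV * t ^ m) has_sum 0) UNIV"
    proof (rule has_sum_SigmaD[OF slices[OF \<open>\<bar>t\<bar> < r\<close>]])
      fix m
      have "(c m has_sum infsum (c m) UNIV) D"
        using has_sum_infsum[OF summable]
        by (rule has_sum_cong_neutral[THEN iffD1, rotated -1]) (auto simp: c_def D_def)
      then have "((\<lambda>\<nu>. t ^ m * c m \<nu>) has_sum t ^ m * infsum (c m) UNIV) D"
        by (rule has_sum_cmult_right)
      then show "((\<lambda>\<nu>. (\<lambda>(m, \<nu>). t ^ m * c m \<nu>) (m, \<nu>)) has_sum infsum (c m) UNIV * t ^ m) D"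
        by (simp add: mult.commute)
    qed
  qed
  then show ?thesis
    using has_sum_infsum[OF summable[of m]] by (simp add: c_def[abs_def])
qed

lemma mono_pow_series_eq_0_on_support:
  fixes b :: "('n::finite \<Rightarrow> nat) \<Rightarrow> real"
  assumes "finite S" and "r > 0"
    and "\<And>\<mu> i. b \<mu> \<noteq> 0 \<Longrightarrow> i \<notin> S \<Longrightarrow> \<mu> i = 0"
    and "\<And>v. \<forall>i. \<bar>v$i\<bar> < r \<Longrightarrow> ((\<lambda>\<mu>. b \<mu> * mono_pow v \<mu>) has_sum 0) UNIV"
  shows "b \<mu> = 0"
  using assms(1,3,4)
proof (induction S arbitrary: b \<mu> rule: finite_induct)
  case empty
  have "((\<lambda>\<mu>. b \<mu> * mono_pow 0 \<mu>) has_sum b (\<lambda>_. 0)) UNIV"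
    by (rule has_sum_finite_neutralI[where B = "{\<lambda>_. 0}"]) (auto simp: mono_pow_zero_vec)
  moreover have "((\<lambda>\<mu>. b \<mu> * mono_pow 0 \<mu>) has_sum 0) UNIV"
    using empty.prems(2)[of 0] \<open>r > 0\<close> by simp
  ultimately have "b (\<lambda>_. 0) = 0"
    using has_sum_unique by blast
  moreover have "\<mu> = (\<lambda>_. 0)" if "b \<mu> \<noteq> 0"
    using empty.prems(1)[OF that] by auto
  ultimately show ?case
    by blast
next
  case (insert k S)
  have "(if \<nu> k = 0 then b (\<nu>(k := m)) else 0) = 0" for m \<nu>
  proof (rule insert.IH[where b = "\<lambda>\<nu>. if \<nu> k = 0 then b (\<nu>(k := m)) else 0"])
    show "\<nu>' i = 0" if "(if \<nu>' k = 0 then b (\<nu>'(k := m)) else 0) \<noteq> 0" "i \<notin> S" for \<nu>' i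
    proof -
      have "\<nu>' k = 0" and "b (\<nu>'(k := m)) \<noteq> 0"
        using that(1) by (auto split: if_splits)
      then have "i \<noteq> k \<Longrightarrow> (\<nu>'(k := m)) i = 0"
        using insert.prems(1) that(2) by blast
      with \<open>\<nu>' k = 0\<close> show ?thesis
        by (cases "i = k") auto
    qed
    show "((\<lambda>\<nu>. (if \<nu> k = 0 then b (\<nu>(k := m)) else 0) * mono_pow v \<nu>) has_sum 0) UNIV"
      if "\<forall>i. \<bar>v$i\<bar> < r" for v
      by (rule mono_pow_series_slice_eq_0[OF \<open>r > 0\<close> insert.prems(2) that])
  qed
  from this[of "\<mu>(k := 0)" "\<mu> k"] show ?case
    by simp
qed

lemma mono_pow_series_eq_0:
  fixes b :: "('n::finite \<Rightarrow> nat) \<Rightarrow> real"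
  assumes "r > 0" and "\<And>v. \<forall>i. \<bar>v$i\<bar> < r \<Longrightarrow> ((\<lambda>\<mu>. b \<mu> * mono_pow v \<mu>) has_sum 0) UNIV"
  shows "b \<mu> = 0"
  using mono_pow_series_eq_0_on_support[of UNIV r b] assms by auto

lemma power_series_at_unique:
  fixes a b :: "('n::finite \<Rightarrow> nat) \<Rightarrow> real"
  assumes "power_series_at f z0 a" and "power_series_at f z0 b"
  shows "a = b"
proof -
  obtain ra rb where "ra > 0" "rb > 0"
    and a: "\<And>z. \<forall>i. \<bar>z$i - z0$i\<bar> < ra \<Longrightarrow> ((\<lambda>\<mu>. a \<mu> * mono_pow (z - z0) \<mu>) has_sum f z) UNIV"
    and b: "\<And>z. \<forall>i. \<bar>z$i - z0$i\<bar> < rb \<Longrightarrow> ((\<lambda>\<mu>. b \<mu> * mono_pow (z - z0) \<mu>) has_sum f z) UNIV"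
    using assms unfolding power_series_at_def by metis
  have "a \<mu> - b \<mu> = 0" for \<mu>
  proof (rule mono_pow_series_eq_0[where r = "min ra rb" and b = "\<lambda>\<mu>. a \<mu> - b \<mu>"])
    fix v :: "real^'n"
    assume "\<forall>i. \<bar>v$i\<bar> < min ra rb"
    then show "((\<lambda>\<mu>. (a \<mu> - b \<mu>) * mono_pow v \<mu>) has_sum 0) UNIV"
      using has_sum_diff[OF a[of "z0 + v"] b[of "z0 + v"]] by (simp add: left_diff_distrib)
  qed (use \<open>ra > 0\<close> \<open>rb > 0\<close> in simp)
  then show ?thesis
    by auto
qed

definition exp_coeff :: "'n::finite \<Rightarrow> ('n \<Rightarrow> nat) \<Rightarrow> real"
  where "exp_coeff i \<mu> = (if \<mu> = (\<lambda>_. 0)(i := \<mu> i) then 1 / fact (\<mu> i) else 0)"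

lemma exp_coeff_nonneg: "0 \<le> exp_coeff i \<mu>"
  by (simp add: exp_coeff_def)

lemma exp_coeff_zero_index [simp]: "exp_coeff i (\<lambda>_. 0) = 1"
  by (simp add: exp_coeff_def fun_eq_iff)

lemma has_sum_exp_coeff: "((\<lambda>\<mu>. exp_coeff i \<mu> * mono_pow w \<mu>) has_sum exp (w$i)) UNIV"
proof -
  define e where "e k = (\<lambda>_. 0)(i := k)" for k :: nat
  have "inj e"
    by (rule injI) (metis e_def fun_upd_same)
  moreover have "exp_coeff i (e k) * mono_pow w (e k) = (w$i) ^ k / fact k" for k
    using mono_pow_fun_upd[of "\<lambda>_. 0" i w w k] by (simp add: exp_coeff_def e_def)
  ultimately have "((\<lambda>\<mu>. exp_coeff i \<mu> * mono_pow w \<mu>) has_sum exp (w$i)) (range e)"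
    using has_sum_exp_series[of "w$i"] by (simp add: has_sum_reindex comp_def)
  then show ?thesis
    by (rule has_sum_cong_neutral[THEN iffD1, rotated -1]) (auto simp: exp_coeff_def e_def)
qed

definition exp_mix_coeff :: "('n::finite \<Rightarrow> real) \<Rightarrow> ('n \<Rightarrow> nat) \<Rightarrow> real"
  where "exp_mix_coeff p \<mu> = (if \<mu> = (\<lambda>_. 0) then 0 else \<Sum>i\<in>UNIV. p i * exp_coeff i \<mu>)"

lemma exp_mix_coeff_nonneg: "(\<And>i. 0 \<le> p i) \<Longrightarrow> 0 \<le> exp_mix_coeff p \<mu>"
  by (simp add: exp_mix_coeff_def sum_nonneg exp_coeff_nonneg)

lemma exp_mix_coeff_zero_index [simp]: "exp_mix_coeff p (\<lambda>_. 0) = 0"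
  by (simp add: exp_mix_coeff_def)

lemma has_sum_exp_mix_coeff:
  "((\<lambda>\<mu>. exp_mix_coeff p \<mu> * mono_pow w \<mu>) has_sum (\<Sum>i\<in>UNIV. p i * (exp (w$i) - 1))) UNIV"
proof -
  have "((\<lambda>\<mu>. \<Sum>i\<in>UNIV. p i * (exp_coeff i \<mu> * mono_pow w \<mu>)) has_sum (\<Sum>i\<in>UNIV. p i * exp (w$i))) UNIV"
    by (intro has_sum_sum has_sum_cmult_right has_sum_exp_coeff) simp
  from has_sum_diff[OF this has_sum_mono_pow_const[of "\<Sum>i\<in>UNIV. p i" w]]
  have "((\<lambda>\<mu>. exp_mix_coeff p \<mu> * mono_pow w \<mu>) has_sum (\<Sum>i\<in>UNIV. p i * exp (w$i)) - (\<Sum>i\<in>UNIV. p i)) UNIV"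
  proof (rule has_sum_cong[THEN iffD1, rotated])
    show "(\<Sum>i\<in>UNIV. p i * (exp_coeff i \<mu> * mono_pow w \<mu>))
        - (if \<mu> = (\<lambda>_. 0) then \<Sum>i\<in>UNIV. p i else 0) * mono_pow w \<mu>
        = exp_mix_coeff p \<mu> * mono_pow w \<mu>" for \<mu>
      by (cases "\<mu> = (\<lambda>_. 0)") (simp_all add: exp_mix_coeff_def sum_distrib_right mult.assoc)
  qed
  then show ?thesis
    by (simp add: right_diff_distrib sum_subtractf)
qed

lemma sum_exp_pos: "0 < (\<Sum>i\<in>UNIV. exp (z$i :: real))"
  by (rule sum_pos) auto

lemma smax_pos: "0 < smax z i"
  using sum_exp_pos[of z] by (simp add: smax_def)

lemma sum_smax: "(\<Sum>i\<in>UNIV. smax z i) = 1"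
  using sum_exp_pos[of z] by (simp add: smax_def sum_divide_distrib[symmetric])

lemma smax_le_1: "smax z i \<le> 1"
proof -
  have "smax z i \<le> (\<Sum>k\<in>UNIV. smax z k)"
    by (rule member_le_sum) (auto simp: less_imp_le smax_pos)
  then show ?thesis
    by (simp add: sum_smax)
qed

lemma smax_add_eq:
  "smax (z0 + w) j = smax z0 j * exp (w$j) / (1 + (\<Sum>i\<in>UNIV. smax z0 i * (exp (w$i) - 1)))"
proof -
  have "1 + (\<Sum>i\<in>UNIV. smax z0 i * (exp (w$i) - 1)) = (\<Sum>i\<in>UNIV. smax z0 i * exp (w$i))"
    using sum_smax[of z0] by (simp add: right_diff_distrib sum_subtractf)
  also have "\<dots> = (\<Sum>i\<in>UNIV. exp ((z0 + w)$i)) / (\<Sum>i\<in>UNIV. exp (z0$i))"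
    by (simp add: smax_def exp_add sum_divide_distrib[symmetric])
  finally show ?thesis
    using sum_exp_pos[of z0] by (simp add: smax_def exp_add)
qed

(* By smax_add_eq, smax_coeff expands p_j e^(w_j) / (1 + sum_i p_i (e^(w_i) - 1)) with
   p = smax z0, and smax_majorant expands p_j e^(w_j) / (1 - sum_i p_i (e^(w_i) - 1)). *)
definition smax_coeff :: "real^'n \<Rightarrow> 'n::finite \<Rightarrow> ('n \<Rightarrow> nat) \<Rightarrow> real"
  where "smax_coeff z0 j =
    mi_conv (\<lambda>\<mu>. smax z0 j * exp_coeff j \<mu>) (mi_geom (\<lambda>\<mu>. - exp_mix_coeff (smax z0) \<mu>))"

definition smax_majorant :: "real^'n \<Rightarrow> 'n::finite \<Rightarrow> ('n \<Rightarrow> nat) \<Rightarrow> real"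
  where "smax_majorant z0 j =
    mi_conv (\<lambda>\<mu>. smax z0 j * exp_coeff j \<mu>) (mi_geom (exp_mix_coeff (smax z0)))"

lemma smax_coeff_zero_index: "smax_coeff z0 j (\<lambda>_. 0) = smax z0 j"
  by (simp add: smax_coeff_def)

lemma abs_exp_mix_coeff_smax: "\<bar>exp_mix_coeff (smax z0) \<mu>\<bar> = exp_mix_coeff (smax z0) \<mu>"
  by (rule abs_of_nonneg, rule exp_mix_coeff_nonneg) (simp add: less_imp_le smax_pos)

lemma abs_smax_coeff_le: "\<bar>smax_coeff z0 j \<mu>\<bar> \<le> smax_majorant z0 j \<mu>"
proof -
  have E: "\<bar>smax z0 j * exp_coeff j \<nu>\<bar> = smax z0 j * exp_coeff j \<nu>" for \<nu>
    using smax_pos[of z0 j] exp_coeff_nonneg[of j \<nu>] by simp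
  have G: "\<bar>mi_geom (\<lambda>\<mu>. - exp_mix_coeff (smax z0) \<mu>) \<nu>\<bar> \<le> mi_geom (exp_mix_coeff (smax z0)) \<nu>" for \<nu>
    using abs_mi_geom_le[of "\<lambda>\<mu>. - exp_mix_coeff (smax z0) \<mu>" \<nu>] by (simp add: abs_exp_mix_coeff_smax)
  have "\<bar>smax_coeff z0 j \<mu>\<bar>
      \<le> mi_conv (\<lambda>\<nu>. \<bar>smax z0 j * exp_coeff j \<nu>\<bar>) (\<lambda>\<nu>. \<bar>mi_geom (\<lambda>\<mu>. - exp_mix_coeff (smax z0) \<mu>) \<nu>\<bar>) \<mu>"
    unfolding smax_coeff_def by (rule abs_mi_conv_le)
  also have "\<dots> = mi_conv (\<lambda>\<nu>. smax z0 j * exp_coeff j \<nu>) (\<lambda>\<nu>. \<bar>mi_geom (\<lambda>\<mu>. - exp_mix_coeff (smax z0) \<mu>) \<nu>\<bar>) \<mu>"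
    by (simp only: E)
  also have "\<dots> \<le> smax_majorant z0 j \<mu>"
    unfolding smax_majorant_def
    by (intro mi_conv_mono G mult_nonneg_nonneg) (simp_all add: less_imp_le smax_pos exp_coeff_nonneg)
  finally show ?thesis .
qed

lemma smax_exp_mix_abs_lt_1:
  fixes w z0 :: "real^'n::finite"
  assumes "\<forall>i. \<bar>w$i\<bar> < 1/2"
  shows "(\<Sum>i\<in>UNIV. smax z0 i * (exp \<bar>w$i\<bar> - 1)) < 1"
proof -
  have "exp \<bar>w$i\<bar> - 1 < 1" for i
  proof -
    have "exp \<bar>w$i\<bar> < exp (1/2)"
      using assms by simp
    also have "exp (1/2::real) \<le> 2"
      using exp_bound_lemma[of "1/2::real"] by simp
    finally show ?thesis
      by simp
  qed
  then have "(\<Sum>i\<in>UNIV. smax z0 i * (exp \<bar>w$i\<bar> - 1)) < (\<Sum>i\<in>UNIV. smax z0 i * 1)"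
    by (intro sum_strict_mono mult_strict_left_mono smax_pos) auto
  then show ?thesis
    by (simp add: sum_smax)
qed

lemma has_sum_smax_coeff:
  fixes w z0 :: "real^'n::finite"
  assumes "\<forall>i. \<bar>w$i\<bar> < 1/2"
  shows "((\<lambda>\<mu>. smax_coeff z0 j \<mu> * mono_pow w \<mu>) has_sum smax (z0 + w) j) UNIV"
proof -
  define h where "h = exp_mix_coeff (smax z0)"
  define S where "S = (\<Sum>i\<in>UNIV. smax z0 i * (exp \<bar>w$i\<bar> - 1))"
  define T where "T = (\<Sum>i\<in>UNIV. smax z0 i * (exp (w$i) - 1))"
  have S: "((\<lambda>\<mu>. \<bar>- h \<mu>\<bar> * mono_pow (vec_abs w) \<mu>) has_sum S) UNIV"
    using has_sum_exp_mix_coeff[of "smax z0" "vec_abs w"] by (simp add: h_def S_def abs_exp_mix_coeff_smax)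
  have T: "((\<lambda>\<mu>. - h \<mu> * mono_pow w \<mu>) has_sum - T) UNIV"
    using has_sum_uminus[where f = "\<lambda>\<mu>. h \<mu> * mono_pow w \<mu>" and a = "- T", THEN iffD2]
      has_sum_exp_mix_coeff[of "smax z0" w] by (simp add: h_def T_def)
  have "((\<lambda>\<mu>. mi_geom (\<lambda>\<mu>. - h \<mu>) \<mu> * mono_pow w \<mu>) has_sum 1 / (1 - - T)) UNIV"
    by (rule has_sum_mi_geom[OF _ S _ T]) (simp_all add: h_def S_def smax_exp_mix_abs_lt_1[OF assms])
  moreover have "((\<lambda>\<mu>. smax z0 j * exp_coeff j \<mu> * mono_pow w \<mu>) has_sum smax z0 j * exp (w$j)) UNIV"
    using has_sum_cmult_right[OF has_sum_exp_coeff, of "smax z0 j" j w] by (simp add: mult.assoc)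
  ultimately have "((\<lambda>\<mu>. smax_coeff z0 j \<mu> * mono_pow w \<mu>)
      has_sum smax z0 j * exp (w$j) * (1 / (1 - - T))) UNIV"
    unfolding smax_coeff_def h_def[symmetric] by (rule has_sum_mi_conv[rotated])
  then show ?thesis
    by (simp add: smax_add_eq T_def)
qed

lemma has_sum_smax_majorant:
  fixes w z0 :: "real^'n::finite"
  assumes "\<forall>i. \<bar>w$i\<bar> < 1/2"
  shows "((\<lambda>\<mu>. smax_majorant z0 j \<mu> * mono_pow (vec_abs w) \<mu>)
          has_sum smax z0 j * exp \<bar>w$j\<bar> / (1 - (\<Sum>i\<in>UNIV. smax z0 i * (exp \<bar>w$i\<bar> - 1)))) UNIV"
proof -
  define h where "h = exp_mix_coeff (smax z0)"
  define S where "S = (\<Sum>i\<in>UNIV. smax z0 i * (exp \<bar>w$i\<bar> - 1))"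
  have S: "((\<lambda>\<mu>. \<bar>h \<mu>\<bar> * mono_pow (vec_abs (vec_abs w)) \<mu>) has_sum S) UNIV"
    and S': "((\<lambda>\<mu>. h \<mu> * mono_pow (vec_abs w) \<mu>) has_sum S) UNIV"
    using has_sum_exp_mix_coeff[of "smax z0" "vec_abs w"] by (simp_all add: h_def S_def abs_exp_mix_coeff_smax)
  have "((\<lambda>\<mu>. mi_geom h \<mu> * mono_pow (vec_abs w) \<mu>) has_sum 1 / (1 - S)) UNIV"
    by (rule has_sum_mi_geom[OF _ S _ S']) (simp_all add: h_def S_def smax_exp_mix_abs_lt_1[OF assms])
  moreover have "((\<lambda>\<mu>. smax z0 j * exp_coeff j \<mu> * mono_pow (vec_abs w) \<mu>) has_sum smax z0 j * exp \<bar>w$j\<bar>) UNIV"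
    using has_sum_cmult_right[OF has_sum_exp_coeff, of "smax z0 j" j "vec_abs w"] by (simp add: mult.assoc)
  ultimately have "((\<lambda>\<mu>. smax_majorant z0 j \<mu> * mono_pow (vec_abs w) \<mu>)
      has_sum smax z0 j * exp \<bar>w$j\<bar> * (1 / (1 - S))) UNIV"
    unfolding smax_majorant_def h_def[symmetric] by (rule has_sum_mi_conv[rotated])
  then show ?thesis
    by (simp add: S_def)
qed

lemma power_series_at_smax:
  fixes z0 :: "real^'n::finite"
  shows "power_series_at (\<lambda>z. smax z j) z0 (smax_coeff z0 j)"
  unfolding power_series_at_def
proof (intro exI[of _ "1/2"] conjI allI impI)
  fix z :: "real^'n"
  assume "\<forall>i. \<bar>z$i - z0$i\<bar> < 1/2"
  then show "((\<lambda>\<mu>. smax_coeff z0 j \<mu> * mono_pow (z - z0) \<mu>) has_sum smax z j) UNIV"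
    using has_sum_smax_coeff[of "z - z0" z0 j] by simp
qed simp

lemma majorant_value_le:
  fixes p e S r :: real
  assumes "0 < p" "p \<le> 1" "e \<le> 1 + 2 * r" "S \<le> 2 * r" "0 \<le> r" "r \<le> 1/6"
  shows "p * e / (1 - S) \<le> 1 + p"
proof -
  have "p * e \<le> p * (1 + 2 * r)"
    using assms by (simp add: mult_left_mono)
  also have "\<dots> \<le> (1 + p) * (1 - 2 * r)"
  proof -
    have "p * r \<le> r"
      using mult_right_mono[of p 1 r] assms by simp
    then show ?thesis
      using assms by (simp add: algebra_simps)
  qed
  also have "\<dots> \<le> (1 + p) * (1 - S)"
    using assms by (simp add: mult_left_mono)
  finally show ?thesis
    using assms by (simp add: divide_le_eq)
qed

lemma smax_coeff_abs_tail_le: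
  fixes w z0 :: "real^'n::finite"
  assumes "r \<le> 1/6" and w: "\<forall>i. \<bar>w$i\<bar> \<le> r"
  shows "(\<lambda>\<mu>. \<bar>smax_coeff z0 j \<mu>\<bar> * \<bar>mono_pow w \<mu>\<bar>) summable_on UNIV" (is "?g summable_on _")
    and "(\<Sum>\<^sub>\<infinity>\<mu>\<in>{\<mu>. 1 \<le> mi_deg \<mu>}. \<bar>smax_coeff z0 j \<mu>\<bar> * \<bar>mono_pow w \<mu>\<bar>) \<le> 1"
proof -
  define S where "S = (\<Sum>i\<in>UNIV. smax z0 i * (exp \<bar>w$i\<bar> - 1))"
  have "0 \<le> r"
    using w[rule_format, of j] by linarith
  have w_small: "\<bar>w$i\<bar> < 1/2" for i
    using w[rule_format, of i] assms(1) by linarith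
  have exp_le: "exp \<bar>w$i\<bar> \<le> 1 + 2 * r" for i
  proof -
    have "exp \<bar>w$i\<bar> \<le> 1 + 2 * \<bar>w$i\<bar>"
      using exp_bound_lemma[of "\<bar>w$i\<bar>"] w_small[of i] by simp
    then show ?thesis
      using w[rule_format, of i] by linarith
  qed
  have "exp \<bar>w$i\<bar> - 1 \<le> 2 * r" for i
    using exp_le[of i] by simp
  then have "S \<le> (\<Sum>i\<in>UNIV. smax z0 i * (2 * r))"
    unfolding S_def by (intro sum_mono mult_left_mono) (auto simp: less_imp_le smax_pos)
  then have S_le: "S \<le> 2 * r"
    by (simp add: sum_distrib_right[symmetric] sum_smax)
  have maj: "((\<lambda>\<mu>. smax_majorant z0 j \<mu> * mono_pow (vec_abs w) \<mu>) has_sum smax z0 j * exp \<bar>w$j\<bar> / (1 - S)) UNIV"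
    unfolding S_def using w_small by (intro has_sum_smax_majorant) simp
  have le: "?g \<mu> \<le> smax_majorant z0 j \<mu> * mono_pow (vec_abs w) \<mu>" for \<mu>
    unfolding abs_mono_pow by (intro mult_right_mono abs_smax_coeff_le mono_pow_vec_abs_nonneg)
  show sg: "?g summable_on UNIV"
    by (rule summable_on_comparison_test[OF has_sum_imp_summable[OF maj] le]) simp
  have "infsum ?g UNIV \<le> smax z0 j * exp \<bar>w$j\<bar> / (1 - S)"
    using infsum_mono[OF sg has_sum_imp_summable[OF maj] le] maj by (simp add: infsumI)
  also have "\<dots> \<le> 1 + smax z0 j"
    by (rule majorant_value_le[OF smax_pos smax_le_1 exp_le S_le \<open>0 \<le> r\<close> assms(1)])
  finally show "(\<Sum>\<^sub>\<infinity>\<mu>\<in>{\<mu>. 1 \<le> mi_deg \<mu>}. ?g \<mu>) \<le> 1"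
    using infsum_mi_deg_ge_1[OF sg] smax_pos[of z0 j] by (simp add: smax_coeff_zero_index)
qed

lemma has_analytic_type_mono:
  assumes "has_analytic_type U \<tau>1 \<tau>2 f" and "\<And>z. z \<in> U \<Longrightarrow> \<tau>1' z \<le> \<tau>1 z"
  shows "has_analytic_type U \<tau>1' \<tau>2 f"
  using assms unfolding has_analytic_type_def by (meson order_trans)

lemma has_analytic_type_smax:
  fixes j :: "'n::finite"
  shows "has_analytic_type UNIV (\<lambda>_. 1/6) (\<lambda>_. 1) (\<lambda>z. smax z j)"
  unfolding has_analytic_type_def real_analytic_on_vec_def
proof (intro conjI ballI allI impI)
  fix z0 :: "real^'n"
  show "\<exists>a. power_series_at (\<lambda>z. smax z j) z0 a"
    using power_series_at_smax by blast
next
  fix z0 z :: "real^'n" and a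
  assume "power_series_at (\<lambda>z. smax z j) z0 a" and z: "\<forall>i. \<bar>z$i - z0$i\<bar> \<le> 1/6"
  then have "a = smax_coeff z0 j"
    using power_series_at_unique power_series_at_smax by blast
  moreover have "\<forall>i. \<bar>(z - z0)$i\<bar> \<le> 1/6"
    using z by simp
  ultimately show "(\<lambda>\<mu>. \<bar>a \<mu>\<bar> * \<bar>mono_pow (z - z0) \<mu>\<bar>) summable_on UNIV"
    and "(\<Sum>\<^sub>\<infinity>\<mu>\<in>{\<mu>. 1 \<le> mi_deg \<mu>}. \<bar>a \<mu>\<bar> * \<bar>mono_pow (z - z0) \<mu>\<bar>) \<le> 1"
    using smax_coeff_abs_tail_le[of "1/6" "z - z0" z0 j] by auto
qed

theorem mainTheorem10:
  fixes j :: "'n::finite"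
  shows "has_analytic_type (UNIV :: (real^'n) set) (\<lambda>_. 1 / (2 * exp 2)) (\<lambda>_. 1)
           (\<lambda>z. smax z j)"
proof (rule has_analytic_type_mono[OF has_analytic_type_smax])
  have "3 \<le> exp (2::real)"
    using exp_ge_add_one_self[of 2] by simp
  then show "1 / (2 * exp 2) \<le> (1/6::real)"
    by (simp add: field_simps)
qed

end
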